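(* Let $s_\beta$ be the base phi sum of digits function, and let $I_\beta$, $C_\beta$, $D_\beta$ (indexed from $1$) be the increasing enumerations of the points of increase, constancy, and decrease of $s_\beta$, respectively. Then: (i) $I_\beta(1)=0$, and $\Delta I_\beta$ is the fixed point of the morphism on $\{1,2,4\}$ given by $1\mapsto12$, $2\mapsto4$, $4\mapsto1244$; (ii) $C_\beta(1)=2$, and $\Delta C_\beta$ is the image under the letter-to-letter projection $1\mapsto1$, $2\mapsto2$, $3\mapsto3$, $3'\mapsto3$, $4\mapsto4$ of the fixed point (starting with $2$) of the morphism on $\{1,2,3,3',4\}$ given by $1\mapsto43$, $2\mapsto21$, $3\mapsto21$, $3'\mapsto13'43$, $4\mapsto13'4$; (iii) $D_\beta(1)=6$, and $\Delta D_\beta$ is the shift by one (i.e. the word obtained by deleting the first letter) of the fixed point of the morphism on $\{2,4,5,7\}$ given by $2\mapsto542$, $4\mapsto542$, $5\mapsto7$, $7\mapsto7542$.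
   Context: Let $\varphi=(1+\sqrt5)/2$. Every natural number $N$ can be written uniquely (ignoring leading and trailing zeros) as a finite sum $N=\sum_i d_i\varphi^i$ over integers $i$ (possibly negative), with $d_i\in\{0,1\}$ and no two consecutive digits both equal to $1$; $s_\beta(N)$ is the number of digits $1$, with $s_\beta(0)=0$. $N\ge0$ is a point of increase, constancy, or decrease of $s_\beta$ according as $s_\beta(N+1)-s_\beta(N)$ is $>0$, $=0$, or $<0$. For a sequence $V=(V(n))_{n\ge1}$, $\Delta V=(V(n+1)-V(n))_{n\ge1}$, viewed as an infinite word. The fixed point of a morphism $\mu$ starting with a letter $a$ (where $\mu(a)$ begins with $a$ and has length $\ge2$) is $\lim_n\mu^n(a)$; in (i) it starts with $1$, in (ii) with $2$, and in (iii) with $7$. *)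

theory Defs
  imports Complex_Main "HOL-Library.Infinite_Set"
begin

definition phi :: real where "phi = (1 + sqrt 5) / 2"

text \<open>A base-phi representation of N: the finite set S of positions i (integers) carrying
  digit 1, with no two consecutive positions, and N = sum of phi^i over S.\<close>
definition is_phi_rep :: "nat \<Rightarrow> int set \<Rightarrow> bool" where
  "is_phi_rep N S \<longleftrightarrow> finite S \<and> (\<forall>i\<in>S. i + 1 \<notin> S) \<and> real N = (\<Sum>i\<in>S. phi powi i)"

definition s_beta :: "nat \<Rightarrow> nat" where
  "s_beta N = card (THE S. is_phi_rep N S)"

definition incr_pts :: "nat set" where "incr_pts = {N. s_beta (N + 1) > s_beta N}"
definition const_pts :: "nat set" where "const_pts = {N. s_beta (N + 1) = s_beta N}"
definition decr_pts :: "nat set" where "decr_pts = {N. s_beta (N + 1) < s_beta N}"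

text \<open>Increasing enumerations, indexed from 1.\<close>
definition I_beta :: "nat \<Rightarrow> nat" where "I_beta n = enumerate incr_pts (n - 1)"
definition C_beta :: "nat \<Rightarrow> nat" where "C_beta n = enumerate const_pts (n - 1)"
definition D_beta :: "nat \<Rightarrow> nat" where "D_beta n = enumerate decr_pts (n - 1)"

text \<open>Morphisms on letters (encoded as naturals), their action on words, and fixed points
  lim_n mu^n(a), as infinite words indexed from 0.\<close>
definition morph_iter :: "(nat \<Rightarrow> nat list) \<Rightarrow> nat \<Rightarrow> nat list \<Rightarrow> nat list" where
  "morph_iter mu n w = ((\<lambda>v. concat (map mu v)) ^^ n) w"

definition fixpt :: "(nat \<Rightarrow> nat list) \<Rightarrow> nat \<Rightarrow> nat \<Rightarrow> nat" where
  "fixpt mu a k = morph_iter mu (LEAST n. k < length (morph_iter mu n [a])) [a] ! k"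

definition mu_I :: "nat \<Rightarrow> nat list" where
  "mu_I x = (if x = 1 then [1,2] else if x = 2 then [4] else if x = 4 then [1,2,4,4] else [])"

text \<open>(ii): letter 3' is encoded as 5. 1->43, 2->21, 3->21, 3'->13'43, 4->13'4.\<close>
definition mu_C :: "nat \<Rightarrow> nat list" where
  "mu_C x = (if x = 1 then [4,3] else if x = 2 then [2,1] else if x = 3 then [2,1]
     else if x = 5 then [1,5,4,3] else if x = 4 then [1,5,4] else [])"

definition proj_C :: "nat \<Rightarrow> nat" where
  "proj_C x = (if x = 5 then 3 else x)"

definition mu_D :: "nat \<Rightarrow> nat list" where
  "mu_D x = (if x = 2 then [5,4,2] else if x = 4 then [5,4,2] else if x = 5 then [7]
     else if x = 7 then [7,5,4,2] else [])"

end

theory Submission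
  imports Defs "HOL-Library.Sublist"
begin

(*
  With the Lucas numbers L(n) = phi^n + (1 - phi)^n one has L(2n) = phi^(2n) + phi^(-2n) and
  L(2n+1) = phi^(2n+1) - phi^(-2n-1).  Hence for m <= L(2n-1) the representation of L(2n) + m
  is that of m together with digits at 2n and -2n, while for 1 <= m < L(2n) the representation
  of L(2n+1) + m arises from that of m by replacing its lowest digit, at -2c, with digits at
  -2c-1, -2c-3, ..., -2n+1 and adding digits at 2n+1 and -2n-2.  These two rules determine
  s_beta recursively, and they show that for p >= 2 the words of signs of
  s_beta (N + 1) - s_beta N on [0, L(2p+2)) and on [L(2p+2), L(2p+4)) are XY and XYY, where X
  and Y are the words on [0, L(2p)) and [L(2p), L(2p+2)).  The lists of gaps between
  consecutive occurrences of a fixed sign obey the same substitution, which on the gap letters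
  is realised by the three given morphisms; so the gap sequences are their fixed points.
*)

section \<open>Lucas numbers\<close>

lemma phi_gt_1: "phi > 1"
  unfolding phi_def by (simp add: real_less_rsqrt)

lemma phi_squared: "phi * phi = phi + 1"
  unfolding phi_def by (simp add: field_simps)

lemma phi_powi_add_1: "phi powi (i + 1) = phi powi i + phi powi (i - 1)"
proof -
  have "phi powi (i + 1) = phi powi (i - 1) * (phi * phi)"
    using power_int_add[of phi "i - 1" 2] phi_gt_1 by (simp add: power2_eq_square add.commute)
  also have "\<dots> = phi powi (i - 1) * phi + phi powi (i - 1)"
    by (simp add: phi_squared algebra_simps)
  also have "phi powi (i - 1) * phi = phi powi i"
    using power_int_add_1[of phi "i - 1"] phi_gt_1 by simp
  finally show ?thesis .
qed

fun lucas :: "nat \<Rightarrow> nat" where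
  "lucas 0 = 2"
| "lucas (Suc 0) = 1"
| "lucas (Suc (Suc n)) = lucas n + lucas (Suc n)"

lemma lucas_add_2: "lucas (n + 2) = lucas n + lucas (n + 1)"
  by (simp add: numeral_2_eq_2)

lemma lucas_2_to_6: "lucas 2 = 3" "lucas 3 = 4" "lucas 4 = 7" "lucas 5 = 11" "lucas 6 = 18"
  by (simp_all add: eval_nat_numeral)

lemma lucas_binet: "real (lucas n) = phi ^ n + (1 - phi) ^ n"
proof -
  have golden_power: "x ^ Suc (Suc k) = x ^ k + x ^ Suc k" if "x * x = x + 1" for x :: real and k
  proof -
    have "x ^ Suc (Suc k) = x ^ k * (x * x)"
      by (simp only: power_Suc2 mult.assoc)
    then show ?thesis
      using that by (simp add: distrib_left power_Suc2)
  qed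
  have conjugate_squared: "(1 - phi) * (1 - phi) = (1 - phi) + 1"
    using phi_squared by (simp add: algebra_simps)
  show ?thesis
  proof (induction n rule: lucas.induct)
    case (3 n)
    have "real (lucas (Suc (Suc n))) = (phi ^ n + phi ^ Suc n) + ((1 - phi) ^ n + (1 - phi) ^ Suc n)"
      using 3 by simp
    also have "\<dots> = phi ^ Suc (Suc n) + (1 - phi) ^ Suc (Suc n)"
      by (simp only: golden_power[OF phi_squared] golden_power[OF conjugate_squared])
    finally show ?case .
  qed simp_all
qed

lemma one_minus_phi: "1 - phi = - inverse phi"
  using phi_squared phi_gt_1 by (simp add: field_simps)

lemma lucas_even_powi: "real (lucas (2 * n)) = phi powi (2 * int n) + phi powi (- (2 * int n))"
  using lucas_binet[of "2 * n"]
  by (simp add: one_minus_phi power_int_minus power_int_inverse power_inverse flip: power_int_of_nat)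

lemma lucas_odd_powi:
  "real (lucas (2 * n + 1)) = phi powi (2 * int n + 1) - phi powi (- (2 * int n + 1))"
proof -
  have "phi powi (- (2 * int n + 1)) = inverse phi ^ (2 * n + 1)"
    by (metis power_int_minus power_int_of_nat power_inverse of_nat_Suc of_nat_mult
        of_nat_numeral Suc_eq_plus1 add.commute)
  moreover have "phi powi (2 * int n + 1) = phi ^ (2 * n + 1)"
    by (metis power_int_of_nat of_nat_mult of_nat_numeral of_nat_Suc Suc_eq_plus1 add.commute)
  ultimately show ?thesis
    using lucas_binet[of "2 * n + 1"] by (simp add: one_minus_phi power_minus')
qed

lemma lucas_pos: "0 < lucas n"
  by (induction n rule: lucas.induct) auto

lemma lucas_less:
  assumes "1 \<le> i" "i < j"
  shows "lucas i < lucas j"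
proof -
  have "lucas (Suc (i - 1)) < lucas (Suc (j - 1))"
  proof (rule lift_Suc_mono_less[of "\<lambda>k. lucas (Suc k)"])
    show "lucas (Suc k) < lucas (Suc (Suc k))" for k
      using lucas_pos[of k] by simp
  qed (use assms in simp)
  then show ?thesis
    using assms by simp
qed

lemma lucas_le: "1 \<le> i \<Longrightarrow> i \<le> j \<Longrightarrow> lucas i \<le> lucas j"
  using lucas_less[of i j] by (cases "i = j") auto

lemma lucas_ge: "n \<le> lucas n"
proof (induction n rule: lucas.induct)
  case (3 n)
  then show ?case
    using lucas_pos[of n] by simp
qed simp_all

lemma lucas_even_ge_3: "1 \<le> n \<Longrightarrow> 3 \<le> lucas (2 * n)"
  using lucas_le[of 2 "2 * n"] lucas_2_to_6 by simp

lemma lucas_even_ge_2: "2 \<le> lucas (2 * k)"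
  using lucas_even_ge_3[of k] by (cases k) auto

lemma lucas_odd_less_phi_powi: "real (lucas (2 * n + 1)) < phi powi (2 * int n + 1)"
  using lucas_odd_powi[of n] phi_gt_1 by simp

lemma lucas_even_less_phi_powi: "1 \<le> n \<Longrightarrow> real (lucas (2 * n)) - 1 < phi powi (2 * int n)"
proof -
  assume "1 \<le> n"
  then have "phi powi (- (2 * int n)) < phi powi 0"
    using phi_gt_1 by (intro power_int_strict_increasing) auto
  then show ?thesis
    using lucas_even_powi[of n] by simp
qed

section \<open>Uniqueness of base-\<open>\<phi>\<close> representations\<close>

definition no_adjacent :: "int set \<Rightarrow> bool" where
  "no_adjacent S \<longleftrightarrow> (\<forall>i\<in>S. i + 1 \<notin> S)"

definition phi_val :: "int set \<Rightarrow> real" where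
  "phi_val S = (\<Sum>i\<in>S. phi powi i)"

lemma is_phi_rep_iff: "is_phi_rep N S \<longleftrightarrow> finite S \<and> no_adjacent S \<and> real N = phi_val S"
  unfolding is_phi_rep_def no_adjacent_def phi_val_def ..

lemma phi_val_less:
  assumes "finite S" "no_adjacent S" "\<forall>i\<in>S. i \<le> b"
  shows "phi_val S < phi powi (b + 1)"
  using assms
proof (induction S arbitrary: b rule: finite_linorder_max_induct)
  case empty
  then show ?case
    using phi_gt_1 by (simp add: phi_val_def)
next
  case (insert u S)
  have "\<forall>i\<in>S. i \<le> u - 2"
  proof
    fix i
    assume "i \<in> S"
    then have "i < u" "i + 1 \<noteq> u"
      using insert.hyps(2) insert.prems(1) unfolding no_adjacent_def by auto
    then show "i \<le> u - 2"
      by simp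
  qed
  moreover have "no_adjacent S"
    using insert.prems(1) unfolding no_adjacent_def by blast
  ultimately have "phi_val S < phi powi (u - 1)"
    using insert.IH[of "u - 2"] by simp
  then have "phi_val (insert u S) < phi powi u + phi powi (u - 1)"
    using insert.hyps by (auto simp: phi_val_def)
  also have "\<dots> = phi powi (u + 1)"
    by (simp add: phi_powi_add_1)
  also have "\<dots> \<le> phi powi (b + 1)"
    using insert.prems(2) phi_gt_1 by (intro power_int_increasing) auto
  finally show ?case .
qed

lemma phi_val_diff_less:
  assumes "finite S" "finite T" "no_adjacent T" "a \<in> S - T" "\<forall>i\<in>T - S. i < a"
  shows "phi_val (T - S) < phi_val (S - T)"
proof -
  have "no_adjacent (T - S)"
    using assms(3) unfolding no_adjacent_def by blast
  then have "phi_val (T - S) < phi powi (a - 1 + 1)"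
    using assms by (intro phi_val_less) auto
  also have "\<dots> \<le> phi_val (S - T)"
    using assms(1,4) phi_gt_1 unfolding phi_val_def
    by (intro member_le_sum) (auto intro: less_imp_le)
  finally show ?thesis .
qed

lemma phi_val_inject:
  assumes "finite S" "finite T" "no_adjacent S" "no_adjacent T" "phi_val S = phi_val T"
  shows "S = T"
proof (rule ccontr)
  assume "S \<noteq> T"
  define D where "D = (S - T) \<union> (T - S)"
  have D_iff: "i \<in> D \<longleftrightarrow> (i \<in> S \<and> i \<notin> T) \<or> (i \<in> T \<and> i \<notin> S)" for i
    unfolding D_def by blast
  have "finite D" "D \<noteq> {}"
    using assms(1,2) \<open>S \<noteq> T\<close> unfolding D_def by auto
  define a where "a = Max D"
  have "a \<in> D" "\<forall>i\<in>D. i \<le> a"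
    using \<open>finite D\<close> \<open>D \<noteq> {}\<close> unfolding a_def by auto
  have "phi_val S = phi_val (S \<inter> T) + phi_val (S - T)"
    "phi_val T = phi_val (S \<inter> T) + phi_val (T - S)"
    using assms(1,2) sum.Int_Diff[of S _ T] sum.Int_Diff[of T _ S]
    unfolding phi_val_def by (simp_all add: Int_commute)
  then have "phi_val (S - T) = phi_val (T - S)"
    using assms(5) by simp
  moreover consider "a \<in> S - T" | "a \<in> T - S"
    using \<open>a \<in> D\<close> unfolding D_def by blast
  then have "phi_val (T - S) < phi_val (S - T) \<or> phi_val (S - T) < phi_val (T - S)"
  proof cases
    case 1
    then have "\<forall>i\<in>T - S. i < a"
      using \<open>\<forall>i\<in>D. i \<le> a\<close> by (auto simp: D_iff less_le)
    then show ?thesis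
      using phi_val_diff_less[of S T a] assms 1 by blast
  next
    case 2
    then have "\<forall>i\<in>S - T. i < a"
      using \<open>\<forall>i\<in>D. i \<le> a\<close> by (auto simp: D_iff less_le)
    then show ?thesis
      using phi_val_diff_less[of T S a] assms 2 by blast
  qed
  ultimately show False
    by linarith
qed

lemma is_phi_rep_unique: "is_phi_rep N S \<Longrightarrow> is_phi_rep N T \<Longrightarrow> S = T"
  unfolding is_phi_rep_iff using phi_val_inject by metis

lemma s_beta_eq_card: "is_phi_rep N S \<Longrightarrow> s_beta N = card S"
  unfolding s_beta_def using is_phi_rep_unique by (metis the_equality)

lemma is_phi_rep_mem_less:
  assumes "is_phi_rep N S" "i \<in> S" "real N < phi powi k"
  shows "i < k"
proof (rule ccontr)
  assume "\<not> i < k"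
  then have "phi powi k \<le> phi powi i"
    using phi_gt_1 by (intro power_int_increasing) auto
  also have "\<dots> \<le> phi_val S"
    using assms(1,2) phi_gt_1 unfolding is_phi_rep_iff phi_val_def by (intro member_le_sum) auto
  finally show False
    using assms(1,3) unfolding is_phi_rep_iff by simp
qed

lemma no_adjacent_Un:
  assumes "no_adjacent A" "no_adjacent B" "\<forall>a\<in>A. \<forall>b\<in>B. a + 1 < b"
  shows "no_adjacent (A \<union> B)"
  using assms unfolding no_adjacent_def by fastforce

lemma no_adjacent_insert:
  "no_adjacent (insert i S) \<longleftrightarrow> no_adjacent S \<and> i + 1 \<notin> S \<and> i - 1 \<notin> S"
  unfolding no_adjacent_def by force

lemma
  assumes "finite A" "finite B" "\<forall>a\<in>A. \<forall>b\<in>B. a + 1 < b"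
  shows phi_val_Un_ordered: "phi_val (A \<union> B) = phi_val A + phi_val B"
    and card_Un_ordered: "card (A \<union> B) = card A + card B"
proof -
  have "A \<inter> B = {}"
    using assms(3) by force
  then show "phi_val (A \<union> B) = phi_val A + phi_val B" "card (A \<union> B) = card A + card B"
    using assms(1,2) by (simp_all add: phi_val_def sum.union_disjoint card_Un_disjoint)
qed

lemma phi_val_insert: "finite S \<Longrightarrow> i \<notin> S \<Longrightarrow> phi_val (insert i S) = phi powi i + phi_val S"
  by (simp add: phi_val_def)

section \<open>Adding a Lucas number\<close>

definition lucas_rank :: "nat \<Rightarrow> nat" where
  "lucas_rank m = (LEAST k. m \<le> lucas (2 * k + 1))"

lemma lucas_rank_le: "m \<le> lucas (2 * k + 1) \<Longrightarrow> lucas_rank m \<le> k"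
  unfolding lucas_rank_def by (rule Least_le)

lemma lucas_rank_eqI:
  assumes "m \<le> lucas (2 * k + 1)" "k = 0 \<or> lucas (2 * k - 1) < m"
  shows "lucas_rank m = k"
  unfolding lucas_rank_def
proof (rule Least_equality)
  fix j
  assume j: "m \<le> lucas (2 * j + 1)"
  show "k \<le> j"
  proof (rule ccontr)
    assume "\<not> k \<le> j"
    then have "lucas (2 * j + 1) \<le> lucas (2 * k - 1)"
      by (intro lucas_le) auto
    then show False
      using j assms(2) \<open>\<not> k \<le> j\<close> by auto
  qed
qed (fact assms(1))

lemma lucas_rank_lucas_even_add:
  assumes "1 \<le> n" "m \<le> lucas (2 * n - 1)"
  shows "lucas_rank (lucas (2 * n) + m) = n"
proof (rule lucas_rank_eqI)
  have "lucas (2 * n + 1) = lucas (2 * n - 1) + lucas (2 * n)"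
    using assms(1) lucas_add_2[of "2 * n - 1"] by (simp add: algebra_simps)
  then show "lucas (2 * n) + m \<le> lucas (2 * n + 1)"
    using assms(2) by simp
  have "lucas (2 * n - 1) < lucas (2 * n)"
    using assms(1) by (intro lucas_less) auto
  then show "n = 0 \<or> lucas (2 * n - 1) < lucas (2 * n) + m"
    by simp
qed

lemma lucas_rank_lucas_odd_add:
  assumes "1 \<le> n" "1 \<le> m" "m < lucas (2 * n)"
  shows "lucas_rank (lucas (2 * n + 1) + m) = n + 1"
proof (rule lucas_rank_eqI)
  have "lucas (2 * n) \<le> lucas (2 * n + 2)"
    using assms(1) by (intro lucas_le) auto
  then show "lucas (2 * n + 1) + m \<le> lucas (2 * (n + 1) + 1)"
    using assms(3) lucas_add_2[of "2 * n + 1"] by simp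
qed (use assms(2) in simp)

(* Tracking the lowest digit is what lets the odd rule below find the digit it replaces. *)
definition is_phi_rep_low :: "nat \<Rightarrow> int set \<Rightarrow> bool" where
  "is_phi_rep_low N S \<longleftrightarrow> is_phi_rep N S \<and> (\<forall>i\<in>S. - 2 * int (lucas_rank N) \<le> i)
     \<and> (1 \<le> N \<longrightarrow> - 2 * int (lucas_rank N) \<in> S)"

lemma is_phi_rep_low_lucas_even_add:
  assumes n: "1 \<le> n" and S: "is_phi_rep_low m S" and m: "m \<le> lucas (2 * n - 1)"
  shows "is_phi_rep_low (lucas (2 * n) + m) (insert (2 * int n) (insert (- (2 * int n)) S))"
    and "card (insert (2 * int n) (insert (- (2 * int n)) S)) = card S + 2"
proof -
  obtain k where k: "n = k + 1"
    using n by (metis le_add_diff_inverse2)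
  have rep: "finite S" "no_adjacent S" "real m = phi_val S"
    using S unfolding is_phi_rep_low_def is_phi_rep_iff by auto
  have top: "i \<le> 2 * int n - 2" if "i \<in> S" for i
  proof -
    have "real m < phi powi (2 * int k + 1)"
      using m lucas_odd_less_phi_powi[of k] k by simp
    then show ?thesis
      using is_phi_rep_mem_less[OF _ that] S k unfolding is_phi_rep_low_def by fastforce
  qed
  have bottom: "- 2 * int n + 2 \<le> i" if "i \<in> S" for i
  proof -
    have "lucas_rank m \<le> k"
      using m k by (intro lucas_rank_le) simp
    then show ?thesis
      using S that k unfolding is_phi_rep_low_def by force
  qed
  have rank: "lucas_rank (lucas (2 * n) + m) = n"
    using n m by (rule lucas_rank_lucas_even_add)
  let ?T = "insert (2 * int n) (insert (- (2 * int n)) S)"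
  have new_digits: "2 * int n \<notin> S" "- (2 * int n) \<notin> S" "2 * int n \<noteq> - (2 * int n)"
    using top bottom n by force+
  have "real (lucas (2 * n) + m) = phi_val ?T"
    using rep new_digits lucas_even_powi[of n] by (simp add: phi_val_insert)
  moreover have "no_adjacent ?T"
    using rep top bottom n by (force simp: no_adjacent_insert)
  ultimately show "is_phi_rep_low (lucas (2 * n) + m) ?T"
    unfolding is_phi_rep_low_def is_phi_rep_iff rank using rep bottom n by force
  show "card ?T = card S + 2"
    using rep new_digits by simp
qed

definition odd_block :: "nat \<Rightarrow> nat \<Rightarrow> int set" where
  "odd_block c n = (\<lambda>i. - (2 * int i + 1)) ` {c..<n}"

lemma finite_odd_block [simp]: "finite (odd_block c n)"
  by (simp add: odd_block_def)

lemma card_odd_block: "card (odd_block c n) = n - c"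
  unfolding odd_block_def by (subst card_image) (auto simp: inj_on_def)

lemma odd_block_bounds: "x \<in> odd_block c n \<Longrightarrow> - 2 * int n + 1 \<le> x \<and> x \<le> - 2 * int c - 1"
  unfolding odd_block_def by auto

lemma no_adjacent_odd_block: "no_adjacent (odd_block c n)"
  unfolding no_adjacent_def odd_block_def by auto presburger

lemma phi_val_odd_block:
  assumes "c \<le> n"
  shows "phi_val (odd_block c n) = phi powi (- 2 * int c) - phi powi (- 2 * int n)"
  using assms
proof (induction n rule: dec_induct)
  case (step n)
  have "odd_block c (Suc n) = insert (- (2 * int n + 1)) (odd_block c n)"
    using step.hyps unfolding odd_block_def by (simp add: atLeastLessThanSuc)
  moreover have "- (2 * int n + 1) \<notin> odd_block c n"
    using odd_block_bounds by force
  moreover have "phi powi (- 2 * int n) = phi powi (- (2 * int n + 1)) + phi powi (- 2 * int (Suc n))"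
    using phi_powi_add_1[of "- (2 * int n + 1)"] by (simp add: algebra_simps)
  ultimately show ?case
    using step.IH by (simp add: phi_val_insert)
qed (simp add: odd_block_def phi_val_def)

lemma is_phi_rep_low_above_lowest:
  assumes "is_phi_rep_low m S" "1 \<le> m" "i \<in> S" "i \<noteq> - 2 * int (lucas_rank m)"
  shows "- 2 * int (lucas_rank m) + 2 \<le> i"
proof -
  have "- 2 * int (lucas_rank m) \<in> S" "- 2 * int (lucas_rank m) \<le> i" "no_adjacent S"
    using assms unfolding is_phi_rep_low_def is_phi_rep_iff by auto
  then have "i \<noteq> - 2 * int (lucas_rank m) + 1"
    using assms(3) unfolding no_adjacent_def by auto
  then show ?thesis
    using \<open>- 2 * int (lucas_rank m) \<le> i\<close> assms(4) by linarith
qed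

(* phi^(2n+1) + phi^(-2n-2) + (phi^(-2c) - phi^(-2n)) = L(2n+1) + phi^(-2c), and the difference
   in brackets telescopes into odd_block c n. *)
lemma lucas_odd_add_digits:
  assumes "finite S" "no_adjacent S" "\<forall>i\<in>S. - 2 * int c + 2 \<le> i \<and> i \<le> 2 * int n - 1" "c \<le> n"
  defines "T \<equiv> insert (2 * int n + 1) (insert (- (2 * int n + 2)) (odd_block c n \<union> S))"
  shows "no_adjacent T" and "card T = n - c + card S + 2"
    and "phi_val T = real (lucas (2 * n + 1)) + phi powi (- 2 * int c) + phi_val S"
    and "\<forall>i\<in>T. - 2 * int (n + 1) \<le> i"
proof -
  have ordered: "\<forall>a\<in>odd_block c n. \<forall>b\<in>S. a + 1 < b"
    using odd_block_bounds assms(3) by force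
  have middle: "finite (odd_block c n \<union> S)" "no_adjacent (odd_block c n \<union> S)"
    using assms(1) no_adjacent_Un[OF no_adjacent_odd_block assms(2) ordered] by simp_all
  have range: "- 2 * int n + 1 \<le> x \<and> x \<le> 2 * int n - 1" if "x \<in> odd_block c n \<union> S" for x
    using that odd_block_bounds[of x c n] assms(3,4) by force
  show "no_adjacent T"
    unfolding T_def using middle(2) range by (fastforce simp: no_adjacent_insert)
  have new_digits: "2 * int n + 1 \<notin> insert (- (2 * int n + 2)) (odd_block c n \<union> S)"
    "- (2 * int n + 2) \<notin> odd_block c n \<union> S"
    using range by force+
  show "card T = n - c + card S + 2"
    unfolding T_def using middle(1) new_digits assms(1) ordered
    by (simp add: card_Un_ordered card_odd_block)
  have "phi powi (- 2 * int n) = phi powi (- (2 * int n + 1)) + phi powi (- (2 * int n + 2))"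
    using phi_powi_add_1[of "- (2 * int n + 1)"] by (simp add: algebra_simps)
  then show "phi_val T = real (lucas (2 * n + 1)) + phi powi (- 2 * int c) + phi_val S"
    unfolding T_def using middle(1) new_digits assms(1,4) ordered lucas_odd_powi[of n]
    by (simp add: phi_val_insert phi_val_Un_ordered phi_val_odd_block)
  show "\<forall>i\<in>T. - 2 * int (n + 1) \<le> i"
    unfolding T_def using range by force
qed

lemma is_phi_rep_low_lucas_odd_add:
  assumes n: "1 \<le> n" and S: "is_phi_rep_low m S" and m: "1 \<le> m" "m < lucas (2 * n)"
  defines "c \<equiv> lucas_rank m"
  defines "T \<equiv> insert (2 * int n + 1) (insert (- (2 * int n + 2))
                  (odd_block c n \<union> (S - {- 2 * int c})))"
  shows "is_phi_rep_low (lucas (2 * n + 1) + m) T" and "card T + c = card S + n + 1"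
proof -
  define S' where "S' = S - {- 2 * int c}"
  have rep: "finite S" "no_adjacent S" "real m = phi_val S"
    using S unfolding is_phi_rep_low_def is_phi_rep_iff by auto
  have S_split: "S = insert (- 2 * int c) S'" "- 2 * int c \<notin> S'"
    using S m unfolding is_phi_rep_low_def c_def S'_def by auto
  have "real m < phi powi (2 * int n)"
    using m lucas_even_less_phi_powi[OF n] by linarith
  then have "i \<le> 2 * int n - 1" if "i \<in> S'" for i
    using is_phi_rep_mem_less[of m S i] S that unfolding is_phi_rep_low_def S'_def by force
  moreover have "- 2 * int c + 2 \<le> i" if "i \<in> S'" for i
    using is_phi_rep_low_above_lowest[OF S m(1)] that unfolding S'_def c_def by blast
  moreover have "c \<le> n"
    unfolding c_def using m lucas_le[of "2 * n" "2 * n + 1"] n by (intro lucas_rank_le) auto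
  moreover have "finite S'" "no_adjacent S'"
    using rep(1,2) unfolding S'_def no_adjacent_def by auto
  ultimately have digits: "no_adjacent T" "card T = n - c + card S' + 2"
    "phi_val T = real (lucas (2 * n + 1)) + phi powi (- 2 * int c) + phi_val S'"
    "\<forall>i\<in>T. - 2 * int (n + 1) \<le> i" "finite T"
    using lucas_odd_add_digits[of S' c n] unfolding T_def S'_def by auto
  moreover have "real m = phi powi (- 2 * int c) + phi_val S'"
    using rep S_split phi_val_insert[of S' "- 2 * int c"] \<open>finite S'\<close> by simp
  ultimately show "is_phi_rep_low (lucas (2 * n + 1) + m) T"
    unfolding is_phi_rep_low_def is_phi_rep_iff lucas_rank_lucas_odd_add[OF n m]
    by (auto simp: T_def)
  have "card S = card S' + 1"
    using S_split rep by simp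
  then show "card T + c = card S + n + 1"
    using digits(2) \<open>c \<le> n\<close> by simp
qed

lemma s_beta_eq_card_low: "is_phi_rep_low N S \<Longrightarrow> s_beta N = card S"
  unfolding is_phi_rep_low_def by (simp add: s_beta_eq_card)

lemma lucas_even_interval:
  assumes "3 \<le> N"
  obtains n where "1 \<le> n" "lucas (2 * n) \<le> N" "N < lucas (2 * n + 2)"
proof -
  have "N < lucas (2 * N + 2)"
    using lucas_ge[of "2 * N + 2"] by simp
  then obtain k where k: "\<forall>i<k. \<not> N < lucas (2 * i + 2)" "N < lucas (2 * k + 2)"
    using ex_least_nat_le[of "\<lambda>k. N < lucas (2 * k + 2)"] by blast
  have "k \<noteq> 0"
    using k(2) assms lucas_2_to_6 by (intro notI) simp
  then have "lucas (2 * (k - 1) + 2) \<le> N"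
    using k(1) by (simp only: not_less diff_less less_one zero_less_iff_neq_zero)
  moreover have "2 * (k - 1) + 2 = 2 * k"
    using \<open>k \<noteq> 0\<close> by simp
  ultimately have "lucas (2 * k) \<le> N"
    by metis
  then show ?thesis
    using that[of k] k(2) \<open>k \<noteq> 0\<close> by simp
qed

lemma is_phi_rep_low_0_1_2: "is_phi_rep_low 0 {}" "is_phi_rep_low 1 {0}" "is_phi_rep_low 2 {1, -2}"
proof -
  have "lucas_rank 0 = 0" "lucas_rank 1 = 0" "lucas_rank 2 = 1"
    by (rule lucas_rank_eqI; simp add: lucas_2_to_6)+
  moreover have "phi powi 1 + phi powi (-2) = 2"
    using phi_powi_add_1[of 0] phi_powi_add_1[of "-1"] by simp
  ultimately show "is_phi_rep_low 0 {}" "is_phi_rep_low 1 {0}" "is_phi_rep_low 2 {1, -2}"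
    unfolding is_phi_rep_low_def is_phi_rep_def by simp_all
qed

lemma is_phi_rep_low_exists: "\<exists>S. is_phi_rep_low N S"
proof (induction N rule: less_induct)
  case (less N)
  show ?case
  proof (cases "3 \<le> N")
    case False
    then have "N = 0 \<or> N = 1 \<or> N = 2"
      by auto
    then show ?thesis
      using is_phi_rep_low_0_1_2 by blast
  next
    case True
    then obtain n where n: "1 \<le> n" "lucas (2 * n) \<le> N" "N < lucas (2 * n + 2)"
      by (rule lucas_even_interval)
    have lucas_odd: "lucas (2 * n + 1) = lucas (2 * n - 1) + lucas (2 * n)"
      using n(1) lucas_add_2[of "2 * n - 1"] by (simp add: algebra_simps)
    show ?thesis
    proof (cases "N \<le> lucas (2 * n + 1)")
      case True
      then obtain S where "is_phi_rep_low (N - lucas (2 * n)) S"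
        using less lucas_pos[of "2 * n"] n(2) by (meson diff_less less_le_trans)
      moreover have "N - lucas (2 * n) \<le> lucas (2 * n - 1)"
        using True lucas_odd by simp
      ultimately show ?thesis
        using is_phi_rep_low_lucas_even_add(1)[of n "N - lucas (2 * n)" S] n by auto
    next
      case False
      then obtain S where "is_phi_rep_low (N - lucas (2 * n + 1)) S"
        using less lucas_pos[of "2 * n + 1"] by (meson diff_less not_le_imp_less le_less_trans zero_le)
      moreover have "1 \<le> N - lucas (2 * n + 1)" "N - lucas (2 * n + 1) < lucas (2 * n)"
        using False n(3) lucas_add_2[of "2 * n"] by auto
      ultimately show ?thesis
        using is_phi_rep_low_lucas_odd_add(1)[of n "N - lucas (2 * n + 1)" S] n False by auto
    qed
  qed
qed

lemma s_beta_lucas_even_add: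
  assumes "1 \<le> n" "m \<le> lucas (2 * n - 1)"
  shows "s_beta (lucas (2 * n) + m) = s_beta m + 2"
proof -
  obtain S where S: "is_phi_rep_low m S"
    using is_phi_rep_low_exists by blast
  show ?thesis
    using is_phi_rep_low_lucas_even_add[OF assms(1) S assms(2)] S
    by (simp add: s_beta_eq_card_low)
qed

lemma s_beta_lucas_odd_add:
  assumes "1 \<le> n" "1 \<le> m" "m < lucas (2 * n)"
  shows "s_beta (lucas (2 * n + 1) + m) + lucas_rank m = s_beta m + n + 1"
proof -
  obtain S where S: "is_phi_rep_low m S"
    using is_phi_rep_low_exists by blast
  show ?thesis
    using is_phi_rep_low_lucas_odd_add[OF assms(1) S assms(2,3)] S
    by (simp add: s_beta_eq_card_low)
qed

section \<open>The signs of the increments of \<open>s_beta\<close>\<close>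

declare lucas.simps(3) [simp del]

lemma s_beta_0_1_2: "s_beta 0 = 0" "s_beta 1 = 1" "s_beta 2 = 2"
  using is_phi_rep_low_0_1_2 by (simp_all add: s_beta_eq_card_low)

lemma lucas_rank_lucas_odd: "lucas_rank (lucas (2 * n + 1)) = n"
proof (rule lucas_rank_eqI)
  show "n = 0 \<or> lucas (2 * n - 1) < lucas (2 * n + 1)"
    using lucas_less[of "2 * n - 1" "2 * n + 1"] by (cases "n = 0") auto
qed simp

lemma lucas_rank_lucas_even: "1 \<le> n \<Longrightarrow> lucas_rank (lucas (2 * n)) = n"
  by (rule lucas_rank_eqI) (auto intro: lucas_le lucas_less)

lemma lucas_rank_lucas_even_minus_1:
  assumes "1 \<le> n"
  shows "lucas_rank (lucas (2 * n) - 1) = n"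
proof (rule lucas_rank_eqI)
  show "lucas (2 * n) - 1 \<le> lucas (2 * n + 1)"
    using lucas_le[of "2 * n" "2 * n + 1"] assms by simp
  obtain k where k: "n = k + 1"
    using assms by (metis le_add_diff_inverse2)
  then have "lucas (2 * n) = lucas (2 * k) + lucas (2 * n - 1)"
    using lucas_add_2[of "2 * k"] by (simp add: algebra_simps)
  then show "n = 0 \<or> lucas (2 * n - 1) < lucas (2 * n) - 1"
    using lucas_even_ge_2[of k] by linarith
qed

lemma s_beta_lucas_odd: "s_beta (lucas (2 * n + 1)) = 2 * n + 1"
proof (induction n)
  case 0
  then show ?case
    using s_beta_0_1_2 by simp
next
  case (Suc n)
  have "lucas (2 * Suc n + 1) = lucas (2 * Suc n) + lucas (2 * n + 1)"
    using lucas_add_2[of "2 * n + 1"] by (simp add: algebra_simps)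
  moreover have "s_beta (lucas (2 * Suc n) + lucas (2 * n + 1)) = s_beta (lucas (2 * n + 1)) + 2"
    by (rule s_beta_lucas_even_add) simp_all
  ultimately show ?case
    using Suc.IH by simp
qed

lemma s_beta_lucas_even: "1 \<le> n \<Longrightarrow> s_beta (lucas (2 * n)) = 2"
  using s_beta_lucas_even_add[of n 0] s_beta_0_1_2 by simp

lemma s_beta_lucas_even_minus_1: "1 \<le> n \<Longrightarrow> s_beta (lucas (2 * n) - 1) = n + 1"
proof (induction n rule: dec_induct)
  case base
  then show ?case
    using s_beta_0_1_2 lucas_2_to_6 by simp
next
  case (step n)
  have "lucas (2 * Suc n) - 1 = lucas (2 * n + 1) + (lucas (2 * n) - 1)"
    using lucas_add_2[of "2 * n"] lucas_pos[of "2 * n"] by simp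
  moreover have "s_beta (lucas (2 * n + 1) + (lucas (2 * n) - 1)) + lucas_rank (lucas (2 * n) - 1)
      = s_beta (lucas (2 * n) - 1) + n + 1"
    using step.hyps lucas_even_ge_3[of n] by (intro s_beta_lucas_odd_add) auto
  ultimately show ?case
    using step lucas_rank_lucas_even_minus_1[of n] by simp
qed

lemma s_beta_3_to_18:
  "s_beta 3 = 2" "s_beta 4 = 3" "s_beta 5 = 3" "s_beta 6 = 3" "s_beta 7 = 2" "s_beta 8 = 3"
  "s_beta 9 = 4" "s_beta 10 = 4" "s_beta 11 = 5" "s_beta 12 = 4" "s_beta 13 = 4" "s_beta 14 = 4"
  "s_beta 15 = 5" "s_beta 16 = 4" "s_beta 17 = 4" "s_beta 18 = 2"
proof -
  have rank: "lucas_rank (Suc 0) = 0" "lucas_rank 2 = 1" "lucas_rank 3 = 1" "lucas_rank 4 = 1"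
    "lucas_rank 5 = 2" "lucas_rank 6 = 2"
    by (rule lucas_rank_eqI; simp add: lucas_2_to_6)+
  have even_1: "s_beta (3 + m) = s_beta m + 2" if "m \<le> 1" for m
    using s_beta_lucas_even_add[of 1 m] that lucas_2_to_6 by simp
  have even_2: "s_beta (7 + m) = s_beta m + 2" if "m \<le> 4" for m
    using s_beta_lucas_even_add[of 2 m] that lucas_2_to_6 by simp
  have odd_1: "s_beta (4 + m) = s_beta m + 2 - lucas_rank m" if "1 \<le> m" "m < 3" for m
    using s_beta_lucas_odd_add[of 1 m] that lucas_2_to_6 by simp
  have odd_2: "s_beta (11 + m) = s_beta m + 3 - lucas_rank m" if "1 \<le> m" "m < 7" for m
    using s_beta_lucas_odd_add[of 2 m] that lucas_2_to_6 by simp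
  note known = s_beta_0_1_2 even_1[of 0] even_1[of 1] odd_1[of 1] odd_1[of 2]
    even_2[of 0] even_2[of 1] even_2[of 2] even_2[of 3] even_2[of 4]
    odd_2[of 1] odd_2[of 2] odd_2[of 3] odd_2[of 4] odd_2[of 5] odd_2[of 6]
  show "s_beta 3 = 2" "s_beta 4 = 3" "s_beta 5 = 3" "s_beta 6 = 3" "s_beta 7 = 2" "s_beta 8 = 3"
    "s_beta 9 = 4" "s_beta 10 = 4" "s_beta 11 = 5" "s_beta 12 = 4" "s_beta 13 = 4"
    "s_beta 14 = 4" "s_beta 15 = 5" "s_beta 16 = 4" "s_beta 17 = 4"
    using known by (simp_all add: rank)
  show "s_beta 18 = 2"
    using s_beta_lucas_even[of 3] lucas_2_to_6 by simp
qed

definition s_diff :: "nat \<Rightarrow> int" where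
  "s_diff N = int (s_beta (N + 1)) - int (s_beta N)"

definition s_sign :: "nat \<Rightarrow> int" where
  "s_sign N = sgn (s_diff N)"

lemma level_sets_s_sign:
  "incr_pts = {N. s_sign N = 1}" "const_pts = {N. s_sign N = 0}" "decr_pts = {N. s_sign N = -1}"
  unfolding incr_pts_def const_pts_def decr_pts_def s_sign_def s_diff_def by (auto simp: sgn_if)

lemma s_diff_lucas_even_add:
  assumes "1 \<le> n" "m < lucas (2 * n - 1)"
  shows "s_diff (lucas (2 * n) + m) = s_diff m"
  using assms s_beta_lucas_even_add[of n m] s_beta_lucas_even_add[of n "m + 1"]
  unfolding s_diff_def by (simp add: add.assoc)

lemma s_diff_lucas_odd_add:
  assumes "1 \<le> n" "1 \<le> m" "m + 1 < lucas (2 * n)"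
  shows "s_diff (lucas (2 * n + 1) + m) = s_diff m - (int (lucas_rank (m + 1)) - int (lucas_rank m))"
  using assms s_beta_lucas_odd_add[of n m] s_beta_lucas_odd_add[of n "m + 1"]
  unfolding s_diff_def by (simp add: add.assoc)

lemma s_diff_lucas_odd:
  assumes "1 \<le> n"
  shows "s_diff (lucas (2 * n + 1)) = 1 - int n"
proof -
  have "s_beta (lucas (2 * n + 1) + 1) + lucas_rank 1 = s_beta 1 + n + 1"
    using assms lucas_even_ge_3[OF assms] by (intro s_beta_lucas_odd_add) auto
  moreover have "lucas_rank 1 = 0"
    by (rule lucas_rank_eqI) simp_all
  ultimately show ?thesis
    unfolding s_diff_def using s_beta_lucas_odd[of n] s_beta_0_1_2 by simp
qed

lemma s_diff_lucas_even_minus_1: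
  assumes "1 \<le> n"
  shows "s_diff (lucas (2 * n) - 1) = 1 - int n"
  using s_beta_lucas_even[OF assms] s_beta_lucas_even_minus_1[OF assms] lucas_pos[of "2 * n"]
  unfolding s_diff_def by simp

lemma s_sign_lucas_odd: "2 \<le> n \<Longrightarrow> s_sign (lucas (2 * n + 1)) = -1"
  using s_diff_lucas_odd[of n] unfolding s_sign_def by simp

lemma s_sign_lucas_even_minus_1: "2 \<le> n \<Longrightarrow> s_sign (lucas (2 * n) - 1) = -1"
  using s_diff_lucas_even_minus_1[of n] unfolding s_sign_def by simp

lemma lucas_rank_Suc_eq:
  assumes "lucas (2 * k - 1) < t" "t + 1 \<le> lucas (2 * k + 1)"
  shows "lucas_rank (t + 1) = lucas_rank t"
  using assms lucas_rank_eqI[of "t + 1" k] lucas_rank_eqI[of t k] by simp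

lemma s_diff_lucas_odd_add_Suc:
  assumes "1 \<le> n" "1 \<le> m" "m + 1 < lucas (2 * n)"
  shows "s_diff (lucas (2 * n + 3) + m) = s_diff (lucas (2 * n + 1) + m)"
proof -
  have "lucas (2 * n) \<le> lucas (2 * (n + 1))"
    using assms(1) by (intro lucas_le) auto
  then show ?thesis
    using assms s_diff_lucas_odd_add[of n m] s_diff_lucas_odd_add[of "n + 1" m]
    by (simp add: eval_nat_numeral)
qed

lemma s_sign_lucas_odd_add_lucas_odd:
  assumes "2 \<le> p"
  shows "s_sign (lucas (2 * p + 3) + lucas (2 * p + 1)) = -1"
proof -
  define b where "b = lucas (2 * p + 1)"
  have next_lucas: "lucas (2 * (p + 1)) = lucas (2 * p) + b" "lucas (2 * (p + 1) + 1) = lucas (2 * p) + 2 * b"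
    unfolding b_def using lucas_add_2[of "2 * p"] lucas_add_2[of "2 * p + 1"]
    by (simp_all add: eval_nat_numeral)
  have "3 \<le> lucas (2 * p)" "1 \<le> b"
    unfolding b_def using assms lucas_pos by (auto intro: lucas_even_ge_3 simp: Suc_le_eq)
  have "lucas_rank (b + 1) = p + 1"
    by (rule lucas_rank_eqI) (use next_lucas \<open>3 \<le> lucas (2 * p)\<close> in \<open>simp_all add: b_def\<close>)
  moreover have "lucas_rank b = p"
    unfolding b_def by (rule lucas_rank_lucas_odd)
  ultimately have "s_diff (lucas (2 * (p + 1) + 1) + b) = s_diff b - 1"
    using s_diff_lucas_odd_add[of "p + 1" b] \<open>3 \<le> lucas (2 * p)\<close> \<open>1 \<le> b\<close> next_lucas
    by simp
  then show ?thesis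
    using s_diff_lucas_odd[of p] assms unfolding s_sign_def b_def by (simp add: eval_nat_numeral)
qed

lemma s_sign_lucas_odd_add_lucas_even_minus_1:
  assumes "2 \<le> p"
  shows "s_sign (lucas (2 * p + 3) + (lucas (2 * p) - 1)) = -1"
proof -
  define a where "a = lucas (2 * p)"
  have "3 \<le> a" "a < lucas (2 * (p + 1))"
    unfolding a_def using assms by (auto intro: lucas_even_ge_3 lucas_less)
  then have "s_diff (lucas (2 * (p + 1) + 1) + (a - 1)) = s_diff (a - 1) - (int p - int p)"
    using s_diff_lucas_odd_add[of "p + 1" "a - 1"] lucas_rank_lucas_even[of p]
      lucas_rank_lucas_even_minus_1[of p] assms
    unfolding a_def by simp
  then show ?thesis
    using s_diff_lucas_even_minus_1[of p] assms unfolding s_sign_def a_def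
    by (simp add: eval_nat_numeral)
qed

(* With a = L(2p) and b = L(2p+1), the two shift lemmas say that the signs on [a+b, 2a+3b)
   repeat those on [0, a), [a, a+b) and [a, a+b).  For p = 1 the first one fails at t = b. *)
lemma s_sign_lucas_even_shift:
  assumes p: "2 \<le> p" and t: "t < lucas (2 * p + 2)"
  shows "s_sign (lucas (2 * p + 2) + t) = s_sign t"
proof -
  define a b where "a = lucas (2 * p)" and "b = lucas (2 * p + 1)"
  have next_lucas: "lucas (2 * p + 2) = a + b" "lucas (2 * p + 3) = a + 2 * b"
    unfolding a_def b_def using lucas_add_2[of "2 * p"] lucas_add_2[of "2 * p + 1"]
    by (simp_all add: eval_nat_numeral)
  have "3 \<le> a"
    unfolding a_def using p by (intro lucas_even_ge_3) simp
  consider (low) "t < b" | (odd) "t = b" | (mid) "b < t" "t + 1 < a + b" | (top) "t = a + b - 1"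
    using t next_lucas by linarith
  then show ?thesis
  proof cases
    case low
    then have "s_diff (lucas (2 * (p + 1)) + t) = s_diff t"
      unfolding b_def by (intro s_diff_lucas_even_add) simp_all
    then show ?thesis
      unfolding s_sign_def by simp
  next
    case odd
    then have "lucas (2 * p + 2) + t = lucas (2 * (p + 1) + 1)" "t = lucas (2 * p + 1)"
      using next_lucas unfolding b_def by (simp_all add: eval_nat_numeral)
    then show ?thesis
      using s_sign_lucas_odd[of "p + 1"] s_sign_lucas_odd[of p] p by simp
  next
    case mid
    define m where "m = t - b"
    have "lucas (2 * p + 2) + t = lucas (2 * p + 3) + m" "t = lucas (2 * p + 1) + m"
      using mid next_lucas unfolding m_def b_def by linarith+
    moreover have "s_diff (lucas (2 * p + 3) + m) = s_diff (lucas (2 * p + 1) + m)"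
      using mid p unfolding m_def a_def by (intro s_diff_lucas_odd_add_Suc) auto
    ultimately show ?thesis
      unfolding s_sign_def by metis
  next
    case top
    then have "lucas (2 * p + 2) + t = lucas (2 * p + 3) + (a - 1)" "t = lucas (2 * (p + 1)) - 1"
      using next_lucas \<open>3 \<le> a\<close> unfolding a_def b_def by (simp_all add: eval_nat_numeral)
    then show ?thesis
      using s_sign_lucas_odd_add_lucas_even_minus_1[OF p] s_sign_lucas_even_minus_1[of "p + 1"] p
      unfolding a_def by simp
  qed
qed

lemma s_sign_lucas_odd_shift:
  assumes p: "2 \<le> p" and t: "lucas (2 * p) \<le> t" "t < lucas (2 * p + 2)"
  shows "s_sign (lucas (2 * p + 3) + t) = s_sign t"
proof -
  define a b where "a = lucas (2 * p)" and "b = lucas (2 * p + 1)"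
  have next_lucas: "lucas (2 * p + 2) = a + b" "lucas (2 * (p + 1) + 1) = a + 2 * b"
    "lucas (2 * (p + 2)) = 2 * a + 3 * b"
    unfolding a_def b_def
    using lucas_add_2[of "2 * p"] lucas_add_2[of "2 * p + 1"] lucas_add_2[of "2 * p + 2"]
    by (simp_all add: eval_nat_numeral)
  have "3 \<le> a" "a \<le> b"
    unfolding a_def b_def using p lucas_even_ge_3[of p] lucas_le[of "2 * p" "2 * p + 1"] by simp_all
  consider (odd) "t = b" | (inner) "t \<noteq> b" "t + 1 < a + b" | (top) "t = a + b - 1"
    using t next_lucas by linarith
  then show ?thesis
  proof cases
    case odd
    then show ?thesis
      using s_sign_lucas_odd_add_lucas_odd[OF p] s_sign_lucas_odd[OF p] unfolding b_def by simp
  next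
    case inner
    have "lucas (2 * p - 1) < a"
      unfolding a_def using p by (intro lucas_less) auto
    have "lucas_rank (t + 1) = lucas_rank t"
    proof (cases "t < b")
      case True
      then show ?thesis
        using \<open>lucas (2 * p - 1) < a\<close> t(1) unfolding a_def b_def
        by (intro lucas_rank_Suc_eq[of p]) auto
    next
      case False
      then show ?thesis
        using inner next_lucas unfolding b_def by (intro lucas_rank_Suc_eq[of "p + 1"]) auto
    qed
    then show ?thesis
      using s_diff_lucas_odd_add[of "p + 1" t] inner t(1) \<open>3 \<le> a\<close> next_lucas
      unfolding s_sign_def a_def by (simp add: eval_nat_numeral)
  next
    case top
    have "lucas (2 * p + 3) + t = lucas (2 * (p + 2)) - 1" "t = lucas (2 * (p + 1)) - 1"
      using top next_lucas \<open>a \<le> b\<close> \<open>3 \<le> a\<close> by (simp_all add: eval_nat_numeral)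
    then show ?thesis
      using s_sign_lucas_even_minus_1[of "p + 2"] s_sign_lucas_even_minus_1[of "p + 1"] p by simp
  qed
qed

lemma s_sign_initial_words:
  "map s_sign [0..<7] = [1, 1, 0, 1, 0, 0, -1]"
  "map s_sign [7..<18] = [1, 1, 0, 1, -1, 0, 0, 1, -1, 0, -1]"
  using s_beta_0_1_2 s_beta_3_to_18
  by (simp_all add: s_sign_def s_diff_def upt_rec eval_nat_numeral)

section \<open>The block substitution\<close>

primrec blocks :: "'a list \<Rightarrow> 'a list \<Rightarrow> nat \<Rightarrow> 'a list \<times> 'a list" where
  "blocks X Y 0 = (X, Y)"
| "blocks X Y (Suc n) = (fst (blocks X Y n) @ snd (blocks X Y n),
    fst (blocks X Y n) @ snd (blocks X Y n) @ snd (blocks X Y n))"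

lemma blocks_invariant:
  assumes "P X GX" "P Y GY" "\<And>U G W H. P U G \<Longrightarrow> P W H \<Longrightarrow> P (U @ W) (G @ H)"
  shows "P (fst (blocks X Y n)) (fst (blocks GX GY n)) \<and> P (snd (blocks X Y n)) (snd (blocks GX GY n))"
  by (induction n) (simp_all add: assms)

lemma length_blocks:
  assumes "Y \<noteq> []"
  shows "n \<le> length (fst (blocks X Y n))"
proof -
  have "n \<le> length (fst (blocks X Y n)) \<and> snd (blocks X Y n) \<noteq> []"
  proof (induction n)
    case (Suc n)
    then have "0 < length (snd (blocks X Y n))" "n \<le> length (fst (blocks X Y n))"
      by simp_all
    then have "Suc n \<le> length (fst (blocks X Y n)) + length (snd (blocks X Y n))"
      by linarith
    then show ?case
      using Suc by simp
  qed (use assms in simp)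
  then show ?thesis
    by simp
qed

lemma set_blocks: "set (fst (blocks X Y n)) \<subseteq> set X \<union> set Y"
proof -
  have "set (fst (blocks X Y n)) \<union> set (snd (blocks X Y n)) \<subseteq> set X \<union> set Y"
    by (induction n) auto
  then show ?thesis
    by simp
qed

lemma blocks_map: "blocks (map f X) (map f Y) n = map_prod (map f) (map f) (blocks X Y n)"
  by (induction n) simp_all

lemma map_upt_shift:
  assumes "\<And>i. i < l \<Longrightarrow> f (c + i) = f (d + i)"
  shows "map f [c..<c + l] = map f [d..<d + l]"
proof -
  have "[k..<k + l] = map (\<lambda>i. k + i) [0..<l]" for k
    using map_add_upt[of k l] by (simp add: add.commute)
  then show ?thesis
    using assms by simp
qed

lemma map_upt_repeat_blocks:
  assumes "\<And>i. i < a \<Longrightarrow> f (a + b + i) = f i"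
    and "\<And>i. i < b \<Longrightarrow> f (a + b + a + i) = f (a + i)"
    and "\<And>i. i < b \<Longrightarrow> f (a + b + a + b + i) = f (a + i)"
  shows "map f [a + b..<a + b + a + b + b] = map f [0..<a] @ map f [a..<a + b] @ map f [a..<a + b]"
proof -
  have "[a + b..<a + b + a + b + b] = [a + b..<a + b + a] @ [a + b + a..<a + b + a + b + b]"
    using upt_add_eq_append[of "a + b" "a + b + a" "b + b"] by (simp add: add.assoc)
  also have "\<dots> = [a + b..<a + b + a] @ [a + b + a..<a + b + a + b] @ [a + b + a + b..<a + b + a + b + b]"
    using upt_add_eq_append[of "a + b + a" "a + b + a + b" b] by simp
  finally show ?thesis
    using map_upt_shift[of a f "a + b" 0] map_upt_shift[of b f "a + b + a" a]
      map_upt_shift[of b f "a + b + a + b" a] assms by simp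
qed

lemma s_sign_blocks:
  "blocks (map s_sign [0..<7]) (map s_sign [7..<18]) n
     = (map s_sign [0..<lucas (2 * n + 4)], map s_sign [lucas (2 * n + 4)..<lucas (2 * n + 6)])"
proof (induction n)
  case 0
  then show ?case
    using lucas_2_to_6 by simp
next
  case (Suc n)
  define p where "p = n + 2"
  define a b where "a = lucas (2 * p)" and "b = lucas (2 * p + 1)"
  have "2 \<le> p"
    unfolding p_def by simp
  have lucas_2p2: "lucas (2 * p + 2) = a + b"
    unfolding a_def b_def using lucas_add_2[of "2 * p"] by simp
  have lengths: "lucas (2 * n + 4) = a" "lucas (2 * n + 6) = a + b" "lucas (2 * Suc n + 4) = a + b"
    "lucas (2 * Suc n + 6) = (a + b) + a + b + b"
    unfolding a_def b_def p_def by (simp_all add: lucas.simps(3) eval_nat_numeral)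
  have shift_1: "s_sign (a + b + i) = s_sign i" if "i < a" for i
    using s_sign_lucas_even_shift[OF \<open>2 \<le> p\<close>, of i] that unfolding lucas_2p2 by simp
  have shift_2: "s_sign (a + b + a + i) = s_sign (a + i)" if "i < b" for i
    using s_sign_lucas_even_shift[OF \<open>2 \<le> p\<close>, of "a + i"] that
    unfolding lucas_2p2 by (simp add: add.assoc)
  have shift_3: "s_sign (a + b + a + b + i) = s_sign (a + i)" if "i < b" for i
  proof -
    have "lucas (2 * p + 3) = a + 2 * b"
      unfolding a_def b_def using lucas_add_2[of "2 * p + 1"] lucas_2p2
      by (simp add: eval_nat_numeral a_def b_def)
    then have "a + b + a + b + i = lucas (2 * p + 3) + (a + i)"
      by linarith
    moreover have "s_sign (lucas (2 * p + 3) + (a + i)) = s_sign (a + i)"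
      using s_sign_lucas_odd_shift[OF \<open>2 \<le> p\<close>, of "a + i"] that lucas_2p2
      unfolding a_def by simp
    ultimately show ?thesis
      by (simp only:)
  qed
  show ?case
    using Suc.IH map_upt_repeat_blocks[of a s_sign b, OF shift_1 shift_2 shift_3]
      upt_add_eq_append[of 0 a b]
    unfolding lengths by simp
qed

section \<open>Gap lists\<close>

definition positions :: "'a \<Rightarrow> 'a list \<Rightarrow> nat set" where
  "positions v W = {i. i < length W \<and> W ! i = v}"

lemma positions_conv_filter: "positions v W = set (filter (\<lambda>i. W ! i = v) [0..<length W])"
  unfolding positions_def by auto

lemma positions_append: "positions v (U @ W) = positions v U \<union> (+) (length U) ` positions v W"
proof (rule set_eqI)
  fix i
  show "i \<in> positions v (U @ W) \<longleftrightarrow> i \<in> positions v U \<union> (+) (length U) ` positions v W"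
  proof (cases "i < length U")
    case False
    then have "i = length U + (i - length U)"
      by simp
    then show ?thesis
      using False unfolding positions_def
      by (auto simp: nth_append intro: image_eqI[of _ _ "i - length U"])
  qed (auto simp: positions_def nth_append)
qed

lemma positions_map_upt: "positions v (map f [0..<l]) = {i. f i = v} \<inter> {..<l}"
  unfolding positions_def by auto

definition gap_starts :: "nat list \<Rightarrow> nat set" where
  "gap_starts G = (\<lambda>k. sum_list (take k G)) ` {..<length G}"

(* Decreases are read off at block ends: their gap word is the fixed point of mu_D without
   its first letter. *)
definition gap_ends :: "nat list \<Rightarrow> nat set" where
  "gap_ends G = (\<lambda>k. sum_list (take (Suc k) G) - 1) ` {..<length G}"

lemma gap_starts_conv_map: "gap_starts G = set (map (\<lambda>k. sum_list (take k G)) [0..<length G])"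
  unfolding gap_starts_def by auto

lemma gap_ends_conv_map: "gap_ends G = set (map (\<lambda>k. sum_list (take (Suc k) G) - 1) [0..<length G])"
  unfolding gap_ends_def by auto

lemma lessThan_length_append:
  "{..<length (G @ H)} = {..<length G} \<union> (+) (length G) ` {..<length H}"
proof (rule set_eqI)
  fix k
  show "k \<in> {..<length (G @ H)} \<longleftrightarrow> k \<in> {..<length G} \<union> (+) (length G) ` {..<length H}"
    by (cases "k < length G") (auto intro: image_eqI[of _ _ "k - length G"])
qed

lemma gap_starts_append: "gap_starts (G @ H) = gap_starts G \<union> (+) (sum_list G) ` gap_starts H"
  unfolding gap_starts_def lessThan_length_append image_Un image_image by simp

lemma gap_ends_append:
  assumes "0 \<notin> set H"
  shows "gap_ends (G @ H) = gap_ends G \<union> (+) (sum_list G) ` gap_ends H"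
proof -
  have "0 < sum_list (take (Suc k) H)" if "k < length H" for k
    using assms that by (cases H) (auto simp: gr0_conv_Suc)
  then have "(\<lambda>k. sum_list (take (Suc k) (G @ H)) - 1) ` (+) (length G) ` {..<length H}
      = (+) (sum_list G) ` gap_ends H"
    unfolding gap_ends_def image_image by (intro image_cong) (auto simp: Suc_le_eq)
  moreover have "(\<lambda>k. sum_list (take (Suc k) (G @ H)) - 1) ` {..<length G} = gap_ends G"
    unfolding gap_ends_def by (intro image_cong) auto
  ultimately show ?thesis
    unfolding gap_ends_def[of "G @ H"] lessThan_length_append image_Un by simp
qed

definition occurs_at_gap_starts :: "'a \<Rightarrow> nat \<Rightarrow> 'a list \<Rightarrow> nat list \<Rightarrow> bool" where
  "occurs_at_gap_starts v d W G \<longleftrightarrow>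
     sum_list G = length W \<and> 0 \<notin> set G \<and> positions v W = (+) d ` gap_starts G"

definition occurs_at_gap_ends :: "'a \<Rightarrow> 'a list \<Rightarrow> nat list \<Rightarrow> bool" where
  "occurs_at_gap_ends v W G \<longleftrightarrow> sum_list G = length W \<and> 0 \<notin> set G \<and> positions v W = gap_ends G"

lemma occurs_at_gap_starts_append:
  assumes "occurs_at_gap_starts v d U G" "occurs_at_gap_starts v d W H"
  shows "occurs_at_gap_starts v d (U @ W) (G @ H)"
proof -
  have "(+) (length U) ` (+) d ` gap_starts H = (+) d ` (+) (sum_list G) ` gap_starts H"
    using assms(1) unfolding occurs_at_gap_starts_def image_image by (simp add: add.left_commute)
  then show ?thesis
    using assms unfolding occurs_at_gap_starts_def
    by (simp add: positions_append gap_starts_append image_Un)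
qed

lemma occurs_at_gap_ends_append:
  assumes "occurs_at_gap_ends v U G" "occurs_at_gap_ends v W H"
  shows "occurs_at_gap_ends v (U @ W) (G @ H)"
  using assms unfolding occurs_at_gap_ends_def by (simp add: positions_append gap_ends_append)

lemma sum_list_take_eq_sum:
  assumes "k \<le> length G" "\<And>i. i < length G \<Longrightarrow> G ! i = w i"
  shows "sum_list (take k G) = (\<Sum>i<k. w i)"
  using assms by (simp add: sum_list_sum_nth atLeast0LessThan min_def)

lemma gap_starts_eq_image:
  "(\<And>i. i < length G \<Longrightarrow> G ! i = w i) \<Longrightarrow> gap_starts G = (\<lambda>k. \<Sum>i<k. w i) ` {..<length G}"
  unfolding gap_starts_def by (intro image_cong) (simp_all add: sum_list_take_eq_sum)

lemma gap_ends_eq_image: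
  "(\<And>i. i < length G \<Longrightarrow> G ! i = w i) \<Longrightarrow> gap_ends G = (\<lambda>k. (\<Sum>i<Suc k. w i) - 1) ` {..<length G}"
  unfolding gap_ends_def by (intro image_cong) (simp_all add: sum_list_take_eq_sum Suc_le_eq)

lemma level_set_eq_range:
  assumes "\<And>n. positions v (map f [0..<l n]) = h ` {..<m n}"
    and "\<And>N. \<exists>n. N < l n" and "\<And>k. \<exists>n. k < m n"
  shows "{N. f N = v} = range h"
proof (intro set_eqI iffI)
  fix N
  assume "N \<in> {N. f N = v}"
  moreover obtain n where "N < l n"
    using assms(2) by blast
  ultimately show "N \<in> range h"
    using assms(1)[of n] unfolding positions_map_upt by blast
next
  fix N
  assume "N \<in> range h"
  then obtain k where "N = h k"
    by blast
  moreover obtain n where "k < m n"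
    using assms(3) by blast
  ultimately show "N \<in> {N. f N = v}"
    using assms(1)[of n] unfolding positions_map_upt by blast
qed

lemma blocks_prefixes:
  fixes GX GY :: "nat list"
  assumes "GY \<noteq> []" "0 \<notin> set GX \<union> set GY"
    and "\<And>n k. k < length (fst (blocks GX GY n)) \<Longrightarrow> fst (blocks GX GY n) ! k = w k"
  shows "\<exists>n. k < length (fst (blocks GX GY n))" and "0 < w k"
proof -
  show "\<exists>n. k < length (fst (blocks GX GY n))"
    using length_blocks[where X = GX and Y = GY and n = "Suc k"] assms(1)
    by (intro exI[of _ "Suc k"]) simp
  then obtain n where "k < length (fst (blocks GX GY n))"
    by blast
  then have "w k \<in> set GX \<union> set GY"
    using assms(3) set_blocks[of GX GY n] by (metis nth_mem subsetD)
  then show "0 < w k"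
    using assms(2) by (metis gr0I)
qed

lemma s_sign_level_set_gap_starts:
  assumes X: "occurs_at_gap_starts v d (map s_sign [0..<7]) GX"
    and Y: "occurs_at_gap_starts v d (map s_sign [7..<18]) GY"
    and w: "\<And>n k. k < length (fst (blocks GX GY n)) \<Longrightarrow> fst (blocks GX GY n) ! k = w k"
  shows "{N. s_sign N = v} = range (\<lambda>k. d + (\<Sum>i<k. w i))" and "0 < w k"
proof -
  let ?G = "\<lambda>n. fst (blocks GX GY n)"
  have occurs: "occurs_at_gap_starts v d (map s_sign [0..<lucas (2 * n + 4)]) (?G n)" for n
    using blocks_invariant[of "occurs_at_gap_starts v d", OF X Y occurs_at_gap_starts_append]
    unfolding s_sign_blocks by simp
  have "GY \<noteq> []" "0 \<notin> set GX \<union> set GY"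
    using X Y unfolding occurs_at_gap_starts_def by auto
  note prefixes = blocks_prefixes[OF this w]
  show "{N. s_sign N = v} = range (\<lambda>k. d + (\<Sum>i<k. w i))"
  proof (rule level_set_eq_range)
    show "positions v (map s_sign [0..<lucas (2 * n + 4)])
        = (\<lambda>k. d + (\<Sum>i<k. w i)) ` {..<length (?G n)}" for n
      using occurs[of n] gap_starts_eq_image[of "?G n" w] w
      unfolding occurs_at_gap_starts_def by (simp add: image_image)
    show "\<exists>n. N < lucas (2 * n + 4)" for N
      using lucas_ge[of "2 * N + 4"] by (intro exI[of _ N]) simp
  qed (use prefixes(1) in blast)
  show "0 < w k"
    by (rule prefixes(2))
qed

lemma s_sign_level_set_gap_ends:
  assumes X: "occurs_at_gap_ends v (map s_sign [0..<7]) GX"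
    and Y: "occurs_at_gap_ends v (map s_sign [7..<18]) GY"
    and w: "\<And>n k. k < length (fst (blocks GX GY n)) \<Longrightarrow> fst (blocks GX GY n) ! k = w k"
  shows "{N. s_sign N = v} = range (\<lambda>k. (\<Sum>i<Suc k. w i) - 1)" and "0 < w k"
proof -
  let ?G = "\<lambda>n. fst (blocks GX GY n)"
  have occurs: "occurs_at_gap_ends v (map s_sign [0..<lucas (2 * n + 4)]) (?G n)" for n
    using blocks_invariant[of "occurs_at_gap_ends v", OF X Y occurs_at_gap_ends_append]
    unfolding s_sign_blocks by simp
  have "GY \<noteq> []" "0 \<notin> set GX \<union> set GY"
    using X Y unfolding occurs_at_gap_ends_def by auto
  note prefixes = blocks_prefixes[OF this w]
  show "{N. s_sign N = v} = range (\<lambda>k. (\<Sum>i<Suc k. w i) - 1)"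
  proof (rule level_set_eq_range)
    show "positions v (map s_sign [0..<lucas (2 * n + 4)])
        = (\<lambda>k. (\<Sum>i<Suc k. w i) - 1) ` {..<length (?G n)}" for n
      using occurs[of n] gap_ends_eq_image[of "?G n" w] w unfolding occurs_at_gap_ends_def by simp
    show "\<exists>n. N < lucas (2 * n + 4)" for N
      using lucas_ge[of "2 * N + 4"] by (intro exI[of _ N]) simp
  qed (use prefixes(1) in blast)
  show "0 < w k"
    by (rule prefixes(2))
qed

lemma s_sign_initial_gap_lists:
  "occurs_at_gap_starts 1 0 (map s_sign [0..<7]) [1, 2, 4]"
  "occurs_at_gap_starts 1 0 (map s_sign [7..<18]) [1, 2, 4, 4]"
  "occurs_at_gap_starts 0 2 (map s_sign [0..<7]) [2, 1, 4]"
  "occurs_at_gap_starts 0 2 (map s_sign [7..<18]) [3, 1, 3, 4]"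
  "occurs_at_gap_ends (-1) (map s_sign [0..<7]) [7]"
  "occurs_at_gap_ends (-1) (map s_sign [7..<18]) [5, 4, 2]"
  unfolding occurs_at_gap_starts_def occurs_at_gap_ends_def s_sign_initial_words
    positions_conv_filter gap_starts_conv_map gap_ends_conv_map
  by (simp_all add: upt_rec eval_nat_numeral)

section \<open>Fixed points of the morphisms\<close>

lemma morph_iter_Suc: "morph_iter mu (Suc n) W = concat (map mu (morph_iter mu n W))"
  unfolding morph_iter_def by simp

lemma morph_iter_Suc_right: "morph_iter mu (Suc n) W = morph_iter mu n (concat (map mu W))"
  unfolding morph_iter_def by (simp del: funpow.simps add: funpow_Suc_right)

lemma morph_iter_add: "morph_iter mu (m + n) W = morph_iter mu m (morph_iter mu n W)"
  unfolding morph_iter_def by (simp add: funpow_add)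

lemma morph_iter_append: "morph_iter mu n (U @ W) = morph_iter mu n U @ morph_iter mu n W"
  by (induction n) (simp_all add: morph_iter_Suc, simp add: morph_iter_def)

lemma prefix_morph_iter: "prefix U W \<Longrightarrow> prefix (morph_iter mu n U) (morph_iter mu n W)"
  by (auto elim!: prefixE simp: morph_iter_append)

lemma prefix_morph_iter_mono:
  assumes "mu a = a # r" "m \<le> n"
  shows "prefix (morph_iter mu m [a]) (morph_iter mu n [a])"
  using assms(2)
proof (induction n rule: dec_induct)
  case (step n)
  have "prefix [a] (concat (map mu [a]))"
    using assms(1) by simp
  then have "prefix (morph_iter mu n [a]) (morph_iter mu (Suc n) [a])"
    unfolding morph_iter_Suc_right by (rule prefix_morph_iter)
  then show ?case
    using step.IH prefix_order.trans by blast
qed simp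

lemma prefix_nth: "prefix U W \<Longrightarrow> k < length U \<Longrightarrow> U ! k = W ! k"
  by (auto elim!: prefixE simp: nth_append)

lemma fixpt_eq_nth:
  assumes "mu a = a # r" "prefix U (morph_iter mu n [a])" "k < length U"
  shows "fixpt mu a k = U ! k"
proof -
  define n0 where "n0 = (LEAST n. k < length (morph_iter mu n [a]))"
  have "k < length (morph_iter mu n [a])"
    using assms(2,3) prefix_length_le by fastforce
  then have "k < length (morph_iter mu n0 [a])" "n0 \<le> n"
    unfolding n0_def by (auto intro: LeastI Least_le)
  then show ?thesis
    unfolding fixpt_def n0_def[symmetric]
    using prefix_nth[OF prefix_morph_iter_mono[of mu a r, OF assms(1)]] prefix_nth[OF assms(2,3)] by simp
qed

lemma blocks_eq_morph_iter:
  assumes "concat (map mu X) = X @ Y" "concat (map mu Y) = X @ Y @ Y"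
  shows "blocks X Y n = (morph_iter mu n X, morph_iter mu n Y)"
proof (induction n)
  case 0
  then show ?case
    by (simp add: morph_iter_def)
next
  case (Suc n)
  then show ?case
    using assms by (simp add: morph_iter_Suc_right morph_iter_append)
qed

lemma fixpt_eq_nth_blocks:
  assumes "mu a = a # r" "concat (map mu X) = X @ Y" "concat (map mu Y) = X @ Y @ Y"
    and "prefix X (morph_iter mu j [a])" "k < length (fst (blocks X Y n))"
  shows "fixpt mu a k = fst (blocks X Y n) ! k"
proof (rule fixpt_eq_nth[of mu a r, OF assms(1) _ assms(5)])
  show "prefix (fst (blocks X Y n)) (morph_iter mu (n + j) [a])"
    using prefix_morph_iter[OF assms(4), of mu n] blocks_eq_morph_iter[OF assms(2,3)]
    by (simp add: morph_iter_add)
qed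

lemma incr_pts_eq_range:
  "incr_pts = range (\<lambda>k. 0 + (\<Sum>i<k. fixpt mu_I 1 i))" "0 < fixpt mu_I 1 k"
proof -
  have "fixpt mu_I 1 k = fst (blocks [1, 2, 4] [1, 2, 4, 4] n) ! k"
    if "k < length (fst (blocks [1, 2, 4 :: nat] [1, 2, 4, 4] n))" for n k
    by (rule fixpt_eq_nth_blocks[where j = 2 and r = "[2]", OF _ _ _ _ that])
      (simp_all add: mu_I_def morph_iter_def numeral_2_eq_2)
  then show "incr_pts = range (\<lambda>k. 0 + (\<Sum>i<k. fixpt mu_I 1 i))" "0 < fixpt mu_I 1 k"
    using s_sign_level_set_gap_starts[OF s_sign_initial_gap_lists(1,2), of "fixpt mu_I 1"]
    by (simp_all add: level_sets_s_sign)
qed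

lemma const_pts_eq_range:
  "const_pts = range (\<lambda>k. 2 + (\<Sum>i<k. proj_C (fixpt mu_C 2 i)))" "0 < proj_C (fixpt mu_C 2 k)"
proof -
  have "blocks [2, 1, 4 :: nat] [3, 1, 3, 4] n = map_prod (map proj_C) (map proj_C) (blocks [2, 1, 4] [3, 1, 5, 4] n)"
    for n using blocks_map[of proj_C "[2, 1, 4]" "[3, 1, 5, 4]" n] by (simp add: proj_C_def)
  moreover have "fixpt mu_C 2 k = fst (blocks [2, 1, 4] [3, 1, 5, 4] n) ! k"
    if "k < length (fst (blocks [2, 1, 4 :: nat] [3, 1, 5, 4] n))" for n k
    by (rule fixpt_eq_nth_blocks[where j = 2 and r = "[1]", OF _ _ _ _ that])
      (simp_all add: mu_C_def morph_iter_def numeral_2_eq_2)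
  ultimately have "fst (blocks [2, 1, 4] [3, 1, 3, 4] n) ! k = proj_C (fixpt mu_C 2 k)"
    if "k < length (fst (blocks [2, 1, 4 :: nat] [3, 1, 3, 4] n))" for n k
    using that by simp
  then show "const_pts = range (\<lambda>k. 2 + (\<Sum>i<k. proj_C (fixpt mu_C 2 i)))"
    "0 < proj_C (fixpt mu_C 2 k)"
    using s_sign_level_set_gap_starts[OF s_sign_initial_gap_lists(3,4),
        where w = "\<lambda>k. proj_C (fixpt mu_C 2 k)"] by (simp_all add: level_sets_s_sign)
qed

lemma decr_pts_eq_range:
  "decr_pts = range (\<lambda>k. 6 + (\<Sum>i<k. fixpt mu_D 7 (Suc i)))" "0 < fixpt mu_D 7 k"
proof -
  have fixpt_blocks: "fixpt mu_D 7 k = fst (blocks [7] [5, 4, 2] n) ! k"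
    if "k < length (fst (blocks [7 :: nat] [5, 4, 2] n))" for n k
    by (rule fixpt_eq_nth_blocks[where j = 0 and r = "[5, 4, 2]", OF _ _ _ _ that])
      (simp_all add: mu_D_def morph_iter_def)
  have "decr_pts = range (\<lambda>k. (\<Sum>i<Suc k. fixpt mu_D 7 i) - 1)"
    using s_sign_level_set_gap_ends[OF s_sign_initial_gap_lists(5,6)] fixpt_blocks
    by (simp add: level_sets_s_sign)
  also have "(\<lambda>k. (\<Sum>i<Suc k. fixpt mu_D 7 i) - 1) = (\<lambda>k. 6 + (\<Sum>i<k. fixpt mu_D 7 (Suc i)))"
    using fixpt_blocks[of 0 0] by (simp add: sum.lessThan_Suc_shift del: sum.lessThan_Suc)
  finally show "decr_pts = range (\<lambda>k. 6 + (\<Sum>i<k. fixpt mu_D 7 (Suc i)))" .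
  show "0 < fixpt mu_D 7 k"
    using s_sign_level_set_gap_ends[OF s_sign_initial_gap_lists(5,6)] fixpt_blocks by simp
qed

lemma enumerate_range_strict_mono:
  fixes f :: "nat \<Rightarrow> nat"
  assumes "strict_mono f"
  shows "enumerate (range f) = f"
proof
  have "infinite (range f)"
    using assms range_inj_infinite strict_mono_imp_inj_on by blast
  fix n
  show "enumerate (range f) n = f n"
  proof (induction n)
    case 0
    show ?case
      unfolding enumerate_0 using assms by (auto intro!: Least_equality simp: strict_mono_less_eq)
  next
    case (Suc n)
    show ?case
      unfolding enumerate_Suc''[OF \<open>infinite (range f)\<close>] Suc
      using assms by (auto intro!: Least_equality simp: strict_mono_less Suc_le_eq strict_mono_less_eq)
  qed
qed

lemma enumerate_partial_sums:
  fixes w :: "nat \<Rightarrow> nat"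
  assumes "S = range (\<lambda>k. d + (\<Sum>i<k. w i))" "\<And>k. 0 < w k"
  shows "infinite S" and "enumerate S k = d + (\<Sum>i<k. w i)"
proof -
  have "strict_mono (\<lambda>k. d + (\<Sum>i<k. w i))"
    using assms(2) by (simp add: strict_mono_Suc_iff)
  then show "infinite S" "enumerate S k = d + (\<Sum>i<k. w i)"
    using assms(1) enumerate_range_strict_mono range_inj_infinite strict_mono_imp_inj_on by auto
qed

theorem theorem7:
  shows "(infinite incr_pts \<and> I_beta 1 = 0 \<and>
           (\<forall>k. int (I_beta (k + 2)) - int (I_beta (k + 1)) = int (fixpt mu_I 1 k)))
       \<and> (infinite const_pts \<and> C_beta 1 = 2 \<and>
           (\<forall>k. int (C_beta (k + 2)) - int (C_beta (k + 1)) = int (proj_C (fixpt mu_C 2 k))))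
       \<and> (infinite decr_pts \<and> D_beta 1 = 6 \<and>
           (\<forall>k. int (D_beta (k + 2)) - int (D_beta (k + 1)) = int (fixpt mu_D 7 (k + 1))))"
proof -
  note incr = enumerate_partial_sums[OF incr_pts_eq_range(1) incr_pts_eq_range(2)]
  note const = enumerate_partial_sums[OF const_pts_eq_range(1) const_pts_eq_range(2)]
  note decr = enumerate_partial_sums[OF decr_pts_eq_range(1) decr_pts_eq_range(2)]
  show ?thesis
    unfolding I_beta_def C_beta_def D_beta_def using incr const decr by simp
qed

end
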